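(* Let $G$ be a connected edge-stable equimatchable graph and let $v\in V(G)$ be a cut vertex. Then every connected component of $G-v$ that is factor-critical consists of a single vertex.
   Context: All graphs are finite and simple. A graph is equimatchable if all its maximal matchings have the same cardinality; an equimatchable graph $G$ is edge-stable if $G\setminus e$ (delete edge $e$, keep vertices) is equimatchable for every $e\in E(G)$. A graph $H$ is factor-critical if $H-x$ has a perfect matching for every $x\in V(H)$. *)

theory Defs
  imports Main
begin

definition graph :: "'a set \<Rightarrow> 'a set set \<Rightarrow> bool" where
  "graph V E \<longleftrightarrow> finite V \<and> (\<forall>e\<in>E. \<exists>u w. u \<noteq> w \<and> e = {u, w} \<and> u \<in> V \<and> w \<in> V)"

definition matching :: "'a set set \<Rightarrow> 'a set set \<Rightarrow> bool" where
  "matching E M \<longleftrightarrow> M \<subseteq> E \<and> (\<forall>e1\<in>M. \<forall>e2\<in>M. e1 \<noteq> e2 \<longrightarrow> e1 \<inter> e2 = {})"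

definition maximal_matching :: "'a set set \<Rightarrow> 'a set set \<Rightarrow> bool" where
  "maximal_matching E M \<longleftrightarrow> matching E M \<and> (\<forall>M'. matching E M' \<and> M \<subseteq> M' \<longrightarrow> M' = M)"

definition equimatchable :: "'a set \<Rightarrow> 'a set set \<Rightarrow> bool" where
  "equimatchable V E \<longleftrightarrow>
     (\<forall>M1 M2. maximal_matching E M1 \<and> maximal_matching E M2 \<longrightarrow> card M1 = card M2)"

definition edge_stable :: "'a set \<Rightarrow> 'a set set \<Rightarrow> bool" where
  "edge_stable V E \<longleftrightarrow> equimatchable V E \<and> (\<forall>e\<in>E. equimatchable V (E - {e}))"

definition induced_edges :: "'a set set \<Rightarrow> 'a set \<Rightarrow> 'a set set" where
  "induced_edges E S = {e \<in> E. e \<subseteq> S}"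

inductive reachable :: "'a set \<Rightarrow> 'a set set \<Rightarrow> 'a \<Rightarrow> 'a \<Rightarrow> bool"
  for V E where
  refl: "u \<in> V \<Longrightarrow> reachable V E u u"
| step: "reachable V E u w \<Longrightarrow> {w, x} \<in> E \<Longrightarrow> x \<in> V \<Longrightarrow> reachable V E u x"

definition connected :: "'a set \<Rightarrow> 'a set set \<Rightarrow> bool" where
  "connected V E \<longleftrightarrow> V \<noteq> {} \<and> (\<forall>u\<in>V. \<forall>w\<in>V. reachable V E u w)"

definition del_vertex_V :: "'a set \<Rightarrow> 'a \<Rightarrow> 'a set" where
  "del_vertex_V V v = V - {v}"

definition del_vertex_E :: "'a set set \<Rightarrow> 'a \<Rightarrow> 'a set set" where
  "del_vertex_E E v = {e \<in> E. v \<notin> e}"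

definition components :: "'a set \<Rightarrow> 'a set set \<Rightarrow> 'a set set" where
  "components V E = {{w. reachable V E u w} | u. u \<in> V}"

definition cut_vertex :: "'a set \<Rightarrow> 'a set set \<Rightarrow> 'a \<Rightarrow> bool" where
  "cut_vertex V E v \<longleftrightarrow> v \<in> V \<and>
     card (components (del_vertex_V V v) (del_vertex_E E v)) > card (components V E)"

definition perfect_matching :: "'a set \<Rightarrow> 'a set set \<Rightarrow> 'a set set \<Rightarrow> bool" where
  "perfect_matching V E M \<longleftrightarrow> matching E M \<and> \<Union>M = V"

definition factor_critical :: "'a set \<Rightarrow> 'a set set \<Rightarrow> bool" where
  "factor_critical V E \<longleftrightarrow>
     (\<forall>x\<in>V. \<exists>M. perfect_matching (del_vertex_V V x) (del_vertex_E E x) M)"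

end

theory Submission
  imports Defs
begin

text \<open>Suppose the factor-critical component \<open>C\<close> of \<open>G - v\<close> has more than one vertex.
  Let \<open>c\<close> be a neighbour of \<open>v\<close> in \<open>C\<close>, \<open>d\<close> a neighbour of \<open>v\<close> in another component,
  \<open>M\<^sub>c\<close> a perfect matching of \<open>C - c\<close>, \<open>P\<close> a maximal matching of \<open>G - C\<close> containing \<open>vd\<close>,
  and \<open>N\<close> a maximal matching of \<open>G - C - v\<close>. Both \<open>vc + M\<^sub>c + N\<close> and \<open>M\<^sub>c + P\<close> are
  maximal in \<open>G\<close>, so \<open>|P| = |N| + 1\<close>. For an edge \<open>e = xy\<close> of \<open>M\<^sub>c\<close> and a perfect
  matching \<open>M\<^sub>x\<close> of \<open>C - x\<close>, both \<open>vc + (M\<^sub>c - e) + N\<close> and \<open>M\<^sub>x + P\<close> are maximal in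
  \<open>G - e\<close>, so \<open>|P| = |N|\<close>: a contradiction.\<close>

subsection \<open>Graphs\<close>

lemma graph_finite_edges: "graph V E \<Longrightarrow> finite E"
proof -
  assume "graph V E"
  then have "E \<subseteq> Pow V" "finite (Pow V)"
    unfolding graph_def by auto
  then show ?thesis by (rule finite_subset)
qed

lemma graph_edgeE:
  assumes "graph V E" "f \<in> E"
  obtains a b where "a \<noteq> b" "f = {a, b}" "a \<in> V" "b \<in> V"
  using assms unfolding graph_def by blast

lemma graph_edge_vertices: "graph V E \<Longrightarrow> f \<in> E \<Longrightarrow> f \<subseteq> V"
  by (auto elim: graph_edgeE)

lemma graph_empty_notin_edges: "graph V E \<Longrightarrow> {} \<notin> E"
  by (blast elim: graph_edgeE)

lemma graph_edge_not_subset_singleton: "graph V E \<Longrightarrow> f \<in> E \<Longrightarrow> \<not> f \<subseteq> {x}"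
  by (auto elim!: graph_edgeE)

lemma graph_edge_subset_edge:
  assumes "graph V E" "e \<in> E" "f \<in> E" "f \<subseteq> e"
  shows "f = e"
proof -
  obtain a b where ab: "a \<noteq> b" "f = {a, b}"
    using graph_edgeE[OF assms(1,3)] by blast
  obtain x y where xy: "e = {x, y}"
    using graph_edgeE[OF assms(1,2)] by blast
  with ab assms(4) have "a \<in> {x, y}" "b \<in> {x, y}"
    by auto
  with ab xy show ?thesis
    by auto
qed

subsection \<open>Matchings\<close>

lemma matching_subset: "matching E M \<Longrightarrow> M \<subseteq> E' \<Longrightarrow> matching E' M"
  unfolding matching_def by blast

lemma matching_Diff: "matching E M \<Longrightarrow> matching E (M - X)"
  unfolding matching_def by blast

lemma finite_matching:
  assumes "graph V E" "matching E M"
  shows "finite M"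
  using finite_subset[OF _ graph_finite_edges[OF assms(1)]] assms(2) unfolding matching_def by blast

lemma matching_singleton: "e \<in> E \<Longrightarrow> matching E {e}"
  unfolding matching_def by blast

lemma matching_Un:
  assumes "matching E M1" "matching E M2" "\<Union>M1 \<inter> \<Union>M2 = {}"
  shows "matching E (M1 \<union> M2)"
  using assms unfolding matching_def by (simp add: disjoint_iff) blast

lemma matching_induced_edges: "matching (induced_edges E S) M \<Longrightarrow> matching E M \<and> \<Union>M \<subseteq> S"
  unfolding matching_def induced_edges_def by blast

lemma maximal_matching_induced_edges:
  "maximal_matching (induced_edges E S) M \<Longrightarrow> matching E M \<and> \<Union>M \<subseteq> S"
  unfolding maximal_matching_def by (rule matching_induced_edges) blast

lemma equimatchableD:
  "equimatchable V E \<Longrightarrow> maximal_matching E M1 \<Longrightarrow> maximal_matching E M2 \<Longrightarrow> card M1 = card M2"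
  unfolding equimatchable_def by blast

lemma maximal_matching_iff_covers:
  assumes "{} \<notin> E"
  shows "maximal_matching E M \<longleftrightarrow> matching E M \<and> (\<forall>f\<in>E. f \<inter> \<Union>M \<noteq> {})"
proof
  assume max: "maximal_matching E M"
  have "f \<inter> \<Union>M \<noteq> {}" if "f \<in> E" for f
  proof
    assume "f \<inter> \<Union>M = {}"
    with max \<open>f \<in> E\<close> have "matching E (insert f M)"
      unfolding maximal_matching_def matching_def by blast
    with max have "insert f M = M"
      unfolding maximal_matching_def by blast
    with \<open>f \<inter> \<Union>M = {}\<close> have "f = {}"
      by blast
    with \<open>f \<in> E\<close> assms show False
      by simp
  qed
  with max show "matching E M \<and> (\<forall>f\<in>E. f \<inter> \<Union>M \<noteq> {})"
    unfolding maximal_matching_def by blast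
next
  assume cov: "matching E M \<and> (\<forall>f\<in>E. f \<inter> \<Union>M \<noteq> {})"
  have "M' = M" if M': "matching E M'" "M \<subseteq> M'" for M'
  proof (rule ccontr)
    assume "M' \<noteq> M"
    with M' obtain f where f: "f \<in> M'" "f \<notin> M" by blast
    with M'(1) have "f \<in> E"
      unfolding matching_def by blast
    with cov obtain g where g: "g \<in> M" "f \<inter> g \<noteq> {}"
      by blast
    with M'(2) f have "g \<in> M'" "g \<noteq> f"
      by blast+
    with f g show False
      using M'(1) unfolding matching_def by blast
  qed
  with cov show "maximal_matching E M"
    unfolding maximal_matching_def by blast
qed

lemma maximal_matching_induced_covers:
  assumes "graph V E" "maximal_matching (induced_edges E S) M" "f \<in> E" "f \<subseteq> S"
  shows "f \<inter> \<Union>M \<noteq> {}"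
proof -
  have "{} \<notin> induced_edges E S"
    using graph_empty_notin_edges[OF assms(1)] unfolding induced_edges_def by blast
  moreover have "f \<in> induced_edges E S"
    using assms(3,4) unfolding induced_edges_def by simp
  ultimately show ?thesis
    using assms(2) maximal_matching_iff_covers by blast
qed

lemma maximal_matching_subset:
  assumes "maximal_matching E M" "M \<subseteq> E'" "E' \<subseteq> E"
  shows "maximal_matching E' M"
  unfolding maximal_matching_def
proof (intro conjI allI impI)
  show "matching E' M"
    using assms(1,2) matching_subset unfolding maximal_matching_def by blast
  fix M' assume "matching E' M' \<and> M \<subseteq> M'"
  with assms(3) have "matching E M' \<and> M \<subseteq> M'"
    unfolding matching_def by blast
  with assms(1) show "M' = M"
    unfolding maximal_matching_def by blast
qed

lemma ex_maximal_matching_superset: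
  assumes "finite E" "matching E M"
  obtains M' where "M \<subseteq> M'" "maximal_matching E M'"
proof -
  let ?A = "{M'. matching E M' \<and> M \<subseteq> M'}"
  have "finite ?A"
    by (rule finite_subset[of _ "Pow E"]) (auto simp: matching_def assms(1))
  moreover have "M \<in> ?A"
    using assms(2) by simp
  ultimately obtain M' where M': "M' \<in> ?A" "M \<le> M'" "\<forall>M''\<in>?A. M' \<le> M'' \<longrightarrow> M' = M''"
    by (blast dest: finite_has_maximal2)
  then have "maximal_matching E M'"
    unfolding maximal_matching_def by auto
  with M'(1) show thesis
    using that by blast
qed

lemma card_Union_matching:
  assumes "graph V E" "matching E M"
  shows "card (\<Union>M) = 2 * card M"
proof -
  have edges: "A \<in> M \<Longrightarrow> A \<in> E" for A
    using assms(2) unfolding matching_def by blast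
  have "card (\<Union>M) = sum card M"
  proof (rule card_Union_disjoint)
    show "pairwise disjnt M"
      using assms(2) unfolding matching_def pairwise_def disjnt_def by blast
    show "finite A" if "A \<in> M" for A
      using assms(1) edges[OF that] by (auto elim: graph_edgeE)
  qed
  also have "\<dots> = sum (\<lambda>_. 2) M"
    using assms(1) by (intro sum.cong) (auto elim!: graph_edgeE dest!: edges)
  finally show ?thesis by simp
qed

lemma card_Un_matching:
  assumes "graph V E" "matching E M1" "matching E M2" "\<Union>M1 \<inter> \<Union>M2 = {}"
  shows "card (M1 \<union> M2) = card M1 + card M2"
proof (rule card_Un_disjoint)
  show "finite M1" "finite M2"
    using finite_matching[OF assms(1)] assms(2,3) by blast+
  show "M1 \<inter> M2 = {}"
  proof (intro equals0I)
    fix f assume "f \<in> M1 \<inter> M2"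
    with assms(4) have "f = {}"
      by blast
    moreover have "f \<in> E"
      using \<open>f \<in> M1 \<inter> M2\<close> assms(2) unfolding matching_def by blast
    ultimately show False
      using graph_empty_notin_edges[OF assms(1)] by simp
  qed
qed

lemma card_near_perfect_matchings_eq:
  assumes "graph V E" "C \<subseteq> V" "x \<in> C" "y \<in> C"
    and "matching E Mx" "\<Union>Mx = C - {x}" "matching E My" "\<Union>My = C - {y}"
  shows "card Mx = card My"
proof -
  have "finite C"
    using assms(1,2) finite_subset unfolding graph_def by blast
  then have "card (C - {x}) = card (C - {y})"
    using assms(3,4) by (simp add: card_Diff_singleton)
  then show ?thesis
    using card_Union_matching[OF assms(1,5)] card_Union_matching[OF assms(1,7)] assms(6,8)
    by simp
qed

lemma factor_critical_near_perfect_matching: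
  assumes "factor_critical C (induced_edges E' C)" "E' \<subseteq> E" "x \<in> C"
  shows "\<exists>M. matching E M \<and> \<Union>M = C - {x}"
proof -
  obtain M where M: "perfect_matching (del_vertex_V C x) (del_vertex_E (induced_edges E' C) x) M"
    using assms(1,3) unfolding factor_critical_def by blast
  then have "matching (induced_edges E' C) M"
    unfolding perfect_matching_def matching_def del_vertex_E_def by blast
  then have "matching E' M"
    using matching_induced_edges by blast
  moreover from this assms(2) have "M \<subseteq> E"
    unfolding matching_def by blast
  ultimately have "matching E M"
    by (rule matching_subset)
  moreover have "\<Union>M = C - {x}"
    using M unfolding perfect_matching_def del_vertex_V_def by blast
  ultimately show ?thesis
    by blast
qed

subsection \<open>Components\<close>

lemma reachable_in_vertices: "reachable V E u w \<Longrightarrow> u \<in> V \<and> w \<in> V"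
  by (induction rule: reachable.induct) auto

lemma reachable_edge_first:
  "reachable V E w u \<Longrightarrow> {x, w} \<in> E \<Longrightarrow> x \<in> V \<Longrightarrow> reachable V E x u"
proof (induction rule: reachable.induct)
  case (refl w)
  then show ?case
    using reachable.step[OF reachable.refl[of x V E], of w] by simp
next
  case (step w u' u)
  then show ?case
    using reachable.step[of V E x u' u] by simp
qed

lemma reachable_sym: "reachable V E u w \<Longrightarrow> reachable V E w u"
proof (induction rule: reachable.induct)
  case (refl u)
  then show ?case by (rule reachable.refl)
next
  case (step u w x)
  then show ?case
    using reachable_edge_first[of V E w u x] by (simp add: insert_commute)
qed

lemma reachable_trans:
  assumes "reachable V E a b" "reachable V E b c"
  shows "reachable V E a c"
  using assms(2,1)
proof (induction rule: reachable.induct)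
  case (step b c d)
  then show ?case
    using reachable.step[of V E a c d] by simp
qed

lemma componentE:
  assumes "C \<in> components V E"
  obtains u where "u \<in> V" "C = {w. reachable V E u w}"
  using assms unfolding components_def by blast

lemma component_eq_reachable_from:
  assumes "C \<in> components V E" "x \<in> C"
  shows "C = {w. reachable V E x w}"
proof -
  obtain u where C: "C = {w. reachable V E u w}"
    using assms(1) by (blast elim: componentE)
  with assms(2) have "reachable V E u x" by blast
  have "reachable V E x w \<longleftrightarrow> reachable V E u w" for w
    using reachable_trans[OF \<open>reachable V E u x\<close>, of w]
      reachable_trans[OF reachable_sym[OF \<open>reachable V E u x\<close>], of w] by blast
  with C show ?thesis
    by simp
qed

lemma component_subset: "C \<in> components V E \<Longrightarrow> C \<subseteq> V"
  by (auto elim!: componentE dest: reachable_in_vertices)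

lemma component_nonempty: "C \<in> components V E \<Longrightarrow> C \<noteq> {}"
  by (auto elim!: componentE dest: reachable.refl)

lemma component_closed:
  assumes "C \<in> components V E" "a \<in> C" "{a, b} \<in> E" "b \<in> V"
  shows "b \<in> C"
proof -
  have "reachable V E a b"
    using assms(2-4) component_subset[OF assms(1)] reachable.step[OF reachable.refl[of a V E]] by blast
  then show ?thesis
    using component_eq_reachable_from[OF assms(1,2)] by blast
qed

lemma reachable_edge_leaving:
  assumes "reachable V E a b" "a \<in> S" "b \<notin> S"
  shows "\<exists>x\<in>S. \<exists>y\<in>V - S. {x, y} \<in> E"
  using assms by (induction rule: reachable.induct) auto

lemma del_vertex_component_closed:
  assumes "C \<in> components (del_vertex_V V v) (del_vertex_E E v)"
    and "a \<in> C" "{a, b} \<in> E" "b \<in> V" "b \<noteq> v"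
  shows "b \<in> C"
proof -
  have "a \<noteq> v"
    using component_subset[OF assms(1)] assms(2) unfolding del_vertex_V_def by blast
  with assms(3,5) have "{a, b} \<in> del_vertex_E E v"
    unfolding del_vertex_E_def by simp
  moreover have "b \<in> del_vertex_V V v"
    using assms(4,5) unfolding del_vertex_V_def by simp
  ultimately show ?thesis
    by (rule component_closed[OF assms(1,2)])
qed

lemma connected_neighbour_of_closed_set:
  assumes "connected V E" "v \<in> V" "a \<in> S" "S \<subseteq> V - {v}"
    and closed: "\<And>x y. x \<in> S \<Longrightarrow> {x, y} \<in> E \<Longrightarrow> y \<in> V \<Longrightarrow> y \<noteq> v \<Longrightarrow> y \<in> S"
  shows "\<exists>x\<in>S. {x, v} \<in> E"
proof -
  have "reachable V E a v"
    using assms(1-4) unfolding connected_def by blast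
  moreover have "v \<notin> S"
    using assms(4) by blast
  ultimately obtain x y where "x \<in> S" "y \<in> V - S" "{x, y} \<in> E"
    using reachable_edge_leaving[OF _ assms(3)] by blast
  with closed show ?thesis
    by blast
qed

lemma del_vertex_component_neighbour:
  assumes "connected V E" "v \<in> V" "C \<in> components (del_vertex_V V v) (del_vertex_E E v)"
  shows "\<exists>c\<in>C. {c, v} \<in> E"
proof -
  obtain a where a: "a \<in> C"
    using component_nonempty[OF assms(3)] by blast
  have "C \<subseteq> V - {v}"
    using component_subset[OF assms(3)] unfolding del_vertex_V_def .
  show ?thesis
    by (rule connected_neighbour_of_closed_set[OF assms(1,2) a \<open>C \<subseteq> V - {v}\<close>])
      (rule del_vertex_component_closed[OF assms(3)])
qed

lemma card_components_pos:
  assumes "finite V" "v \<in> V"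
  shows "card (components V E) > 0"
proof -
  have "components V E = (\<lambda>u. {w. reachable V E u w}) ` V"
    unfolding components_def by (simp add: setcompr_eq_image)
  with assms show ?thesis
    by (auto simp: card_gt_0_iff)
qed

lemma cut_vertex_other_side:
  assumes "graph V E" "cut_vertex V E v" "C \<in> components (del_vertex_V V v) (del_vertex_E E v)"
  shows "V - {v} - C \<noteq> {}"
proof
  assume empty: "V - {v} - C = {}"
  have "C' = C" if C': "C' \<in> components (del_vertex_V V v) (del_vertex_E E v)" for C'
  proof -
    obtain u where "u \<in> C'"
      using component_nonempty[OF C'] by blast
    moreover from this have "u \<in> C"
      using component_subset[OF C'] empty unfolding del_vertex_V_def by blast
    ultimately show ?thesis
      using component_eq_reachable_from[OF C'] component_eq_reachable_from[OF assms(3)] by metis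
  qed
  then have "card (components (del_vertex_V V v) (del_vertex_E E v)) \<le> card {C}"
    by (intro card_mono) auto
  moreover have "card (components V E) > 0"
    using assms(1,2) unfolding graph_def cut_vertex_def by (blast intro: card_components_pos)
  ultimately show False
    using assms(2) unfolding cut_vertex_def by simp
qed

lemma del_vertex_other_component_neighbour:
  assumes "graph V E" "connected V E" "cut_vertex V E v"
    and C: "C \<in> components (del_vertex_V V v) (del_vertex_E E v)"
  shows "\<exists>d\<in>V - {v} - C. {d, v} \<in> E"
proof -
  obtain a where a: "a \<in> V - {v} - C"
    using cut_vertex_other_side[OF assms(1,3) C] by blast
  have "v \<in> V"
    using assms(3) unfolding cut_vertex_def by blast
  have closed: "y \<in> V - {v} - C"
    if "x \<in> V - {v} - C" "{x, y} \<in> E" "y \<in> V" "y \<noteq> v" for x y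
    using that del_vertex_component_closed[OF C, of y x] by (auto simp: insert_commute)
  show ?thesis
    by (rule connected_neighbour_of_closed_set[OF assms(2) \<open>v \<in> V\<close> a Diff_subset])
      (rule closed)
qed

subsection \<open>Maximal matchings around a cut vertex\<close>

text \<open>\<open>C\<close> is a union of components of \<open>G - v\<close>.\<close>

locale vertex_separation =
  fixes V :: "'a set" and E :: "'a set set" and v :: 'a and C :: "'a set"
  assumes graph: "graph V E"
    and side_subset: "C \<subseteq> V - {v}"
    and edge_cases: "f \<in> E \<Longrightarrow> v \<in> f \<or> f \<subseteq> C \<or> f \<subseteq> V - C - {v}"
begin

lemma maximal_matchingI:
  assumes "matching E M" "M \<subseteq> E'" "E' \<subseteq> E" "v \<in> \<Union>M"
    and outside: "\<And>f. f \<in> E \<Longrightarrow> f \<subseteq> V - C - {v} \<Longrightarrow> f \<inter> \<Union>M \<noteq> {}"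
    and inside: "\<And>f. f \<in> E' \<Longrightarrow> f \<subseteq> C \<Longrightarrow> f \<inter> \<Union>M \<noteq> {}"
  shows "maximal_matching E' M"
proof -
  have "{} \<notin> E'"
    using assms(3) graph_empty_notin_edges[OF graph] by blast
  moreover have "matching E' M"
    using assms(1,2) by (rule matching_subset)
  moreover have "f \<inter> \<Union>M \<noteq> {}" if "f \<in> E'" for f
  proof -
    from that assms(3) have "f \<in> E"
      by blast
    then consider "v \<in> f" | "f \<subseteq> C" | "f \<subseteq> V - C - {v}"
      using edge_cases by blast
    then show ?thesis
    proof cases
      case 1
      with assms(4) show ?thesis
        by blast
    next
      case 2
      with that show ?thesis
        by (rule inside)
    next
      case 3
      with \<open>f \<in> E\<close> show ?thesis
        by (rule outside)
    qed
  qed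
  ultimately show ?thesis
    using maximal_matching_iff_covers by blast
qed

lemma maximal_matching_near_perfect_Un_outside:
  assumes "x \<in> C" "matching E Mx" "\<Union>Mx = C - {x}"
    and P: "maximal_matching (induced_edges E (V - C)) P" "v \<in> \<Union>P"
  shows "maximal_matching E (Mx \<union> P)"
proof (rule maximal_matchingI)
  have P': "matching E P" "\<Union>P \<subseteq> V - C"
    using maximal_matching_induced_edges[OF P(1)] by blast+
  have "\<Union>Mx \<inter> \<Union>P = {}"
    using assms(3) P'(2) by blast
  with assms(2) P'(1) show "matching E (Mx \<union> P)"
    by (rule matching_Un)
  then show "Mx \<union> P \<subseteq> E"
    unfolding matching_def by blast
  show "E \<subseteq> E"
    by (rule order_refl)
  show "v \<in> \<Union>(Mx \<union> P)"
    using P(2) by blast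
  show "f \<inter> \<Union>(Mx \<union> P) \<noteq> {}" if "f \<in> E" "f \<subseteq> V - C - {v}" for f
  proof -
    have "f \<subseteq> V - C"
      using that(2) by blast
    with that(1) have "f \<inter> \<Union>P \<noteq> {}"
      by (rule maximal_matching_induced_covers[OF graph P(1)])
    then show ?thesis
      by blast
  qed
  show "f \<inter> \<Union>(Mx \<union> P) \<noteq> {}" if "f \<in> E" "f \<subseteq> C" for f
  proof -
    have "\<not> f \<subseteq> {x}"
      using graph that(1) by (rule graph_edge_not_subset_singleton)
    with that(2) assms(3) show ?thesis
      by blast
  qed
qed

lemma card_matching_cv_Un:
  assumes "c \<in> C" "{c, v} \<in> E" "matching E M" "\<Union>M \<subseteq> C - {c}"
    and N: "maximal_matching (induced_edges E (V - C - {v})) N"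
  shows "matching E ({{c, v}} \<union> (M \<union> N))" "card ({{c, v}} \<union> (M \<union> N)) = Suc (card M + card N)"
proof -
  have Nm: "matching E N" "\<Union>N \<subseteq> V - C - {v}"
    using maximal_matching_induced_edges[OF N] by blast+
  have cv: "matching E {{c, v}}"
    using assms(2) by (rule matching_singleton)
  have M_N: "\<Union>M \<inter> \<Union>N = {}"
    using assms(4) Nm(2) by blast
  have MN: "matching E (M \<union> N)"
    using assms(3) Nm(1) M_N by (rule matching_Un)
  have cv_MN: "\<Union>{{c, v}} \<inter> \<Union>(M \<union> N) = {}"
    using assms(1,4) Nm(2) side_subset by auto
  show "matching E ({{c, v}} \<union> (M \<union> N))"
    using cv MN cv_MN by (rule matching_Un)
  show "card ({{c, v}} \<union> (M \<union> N)) = Suc (card M + card N)"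
    using card_Un_matching[OF graph cv MN cv_MN] card_Un_matching[OF graph assms(3) Nm(1) M_N]
    by simp
qed

lemma maximal_matching_cv_Un:
  assumes "c \<in> C" "{c, v} \<in> E" "matching E M" "\<Union>M \<subseteq> C - {c}"
    and N: "maximal_matching (induced_edges E (V - C - {v})) N"
    and "{{c, v}} \<union> (M \<union> N) \<subseteq> E'" "E' \<subseteq> E"
    and inside: "\<And>f. f \<in> E' \<Longrightarrow> f \<subseteq> C \<Longrightarrow> f \<inter> insert c (\<Union>M) \<noteq> {}"
  shows "maximal_matching E' ({{c, v}} \<union> (M \<union> N))"
proof (rule maximal_matchingI)
  have U: "\<Union>({{c, v}} \<union> (M \<union> N)) = insert c (insert v (\<Union>M \<union> \<Union>N))"
    by simp
  show "matching E ({{c, v}} \<union> (M \<union> N))"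
    using assms(1-4) N by (rule card_matching_cv_Un(1))
  show "{{c, v}} \<union> (M \<union> N) \<subseteq> E'" "E' \<subseteq> E"
    by fact+
  show "v \<in> \<Union>({{c, v}} \<union> (M \<union> N))"
    unfolding U by blast
  show "f \<inter> \<Union>({{c, v}} \<union> (M \<union> N)) \<noteq> {}" if "f \<in> E" "f \<subseteq> V - C - {v}" for f
    using maximal_matching_induced_covers[OF graph N that] unfolding U by blast
  show "f \<inter> \<Union>({{c, v}} \<union> (M \<union> N)) \<noteq> {}" if "f \<in> E'" "f \<subseteq> C" for f
    using inside[OF that] unfolding U by blast
qed

lemma card_outside_matching_Suc:
  assumes "equimatchable V E" "c \<in> C" "{c, v} \<in> E" and Mc: "matching E Mc" "\<Union>Mc = C - {c}"
    and P: "maximal_matching (induced_edges E (V - C)) P" "v \<in> \<Union>P"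
    and N: "maximal_matching (induced_edges E (V - C - {v})) N"
  shows "card P = Suc (card N)"
proof -
  let ?A = "{{c, v}} \<union> (Mc \<union> N)"
  have Mc_sub: "\<Union>Mc \<subseteq> C - {c}"
    using Mc(2) by simp
  have "maximal_matching E ?A"
  proof (rule maximal_matching_cv_Un[OF assms(2,3) Mc(1) Mc_sub N])
    show "?A \<subseteq> E"
      using card_matching_cv_Un(1)[OF assms(2,3) Mc(1) Mc_sub N] unfolding matching_def by blast
    show "E \<subseteq> E"
      by (rule order_refl)
    show "f \<inter> insert c (\<Union>Mc) \<noteq> {}" if "f \<in> E" "f \<subseteq> C" for f
    proof -
      have "insert c (\<Union>Mc) = C"
        using Mc(2) assms(2) by blast
      moreover have "f \<noteq> {}"
        using that(1) graph_empty_notin_edges[OF graph] by blast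
      ultimately show ?thesis
        using that(2) by blast
    qed
  qed
  moreover have "maximal_matching E (Mc \<union> P)"
    using assms(2) Mc P by (rule maximal_matching_near_perfect_Un_outside)
  ultimately have "card ?A = card (Mc \<union> P)"
    by (rule equimatchableD[OF assms(1)])
  moreover have "card (Mc \<union> P) = card Mc + card P"
    using maximal_matching_induced_edges[OF P(1)] Mc(2)
    by (intro card_Un_matching[OF graph Mc(1)]) blast+
  ultimately show ?thesis
    using card_matching_cv_Un(2)[OF assms(2,3) Mc(1) Mc_sub N] by simp
qed

lemma card_outside_matching_eq:
  assumes "equimatchable V (E - {e})" "c \<in> C" "{c, v} \<in> E"
    and Mc: "matching E Mc" "\<Union>Mc = C - {c}" "e \<in> Mc"
    and Mx: "x \<in> e" "matching E Mx" "\<Union>Mx = C - {x}"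
    and P: "maximal_matching (induced_edges E (V - C)) P" "v \<in> \<Union>P"
    and N: "maximal_matching (induced_edges E (V - C - {v})) N"
  shows "card P = card N"
proof -
  have Pm: "matching E P" "\<Union>P \<subseteq> V - C"
    using maximal_matching_induced_edges[OF P(1)] by blast+
  have eE: "e \<in> E"
    using Mc(1,3) unfolding matching_def by blast
  have eC: "e \<subseteq> C - {c}" and "e \<noteq> {}"
    using Mc(2,3) graph_empty_notin_edges[OF graph] eE by blast+
  with Mx(1) have "x \<in> C"
    by blast
  let ?A = "{{c, v}} \<union> ((Mc - {e}) \<union> N)"
  have Mc_e: "matching E (Mc - {e})"
    using Mc(1) by (rule matching_Diff)
  have Mc_e_sub: "\<Union>(Mc - {e}) \<subseteq> C - {c}"
    using Mc(2) by blast
  have "e \<notin> ?A"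
    using eC \<open>e \<noteq> {}\<close> maximal_matching_induced_edges[OF N] by blast
  have "maximal_matching (E - {e}) ?A"
  proof (rule maximal_matching_cv_Un[OF assms(2,3) Mc_e Mc_e_sub N])
    show "?A \<subseteq> E - {e}"
      using card_matching_cv_Un(1)[OF assms(2,3) Mc_e Mc_e_sub N] \<open>e \<notin> ?A\<close>
      unfolding matching_def by blast
    show "E - {e} \<subseteq> E"
      by blast
    show "f \<inter> insert c (\<Union>(Mc - {e})) \<noteq> {}" if "f \<in> E - {e}" "f \<subseteq> C" for f
    proof -
      have "\<not> f \<subseteq> e"
        using graph_edge_subset_edge[OF graph eE, of f] that(1) by blast
      moreover have "C - e \<subseteq> insert c (\<Union>(Mc - {e}))"
        using Mc(2) by blast
      ultimately show ?thesis
        using that(2) by blast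
    qed
  qed
  moreover have "maximal_matching (E - {e}) (Mx \<union> P)"
  proof (rule maximal_matching_subset)
    show "maximal_matching E (Mx \<union> P)"
      using \<open>x \<in> C\<close> Mx(2,3) P by (rule maximal_matching_near_perfect_Un_outside)
    have "e \<notin> Mx \<union> P"
      using Mx(1,3) Pm(2) eC \<open>e \<noteq> {}\<close> by blast
    with Mx(2) Pm(1) show "Mx \<union> P \<subseteq> E - {e}"
      unfolding matching_def by blast
    show "E - {e} \<subseteq> E"
      by blast
  qed
  ultimately have "card ?A = card (Mx \<union> P)"
    by (rule equimatchableD[OF assms(1)])
  moreover have "Suc (card (Mc - {e})) = card Mc"
    using finite_matching[OF graph Mc(1)] Mc(3) by (rule card_Suc_Diff1)
  moreover have "card Mx = card Mc"
    using \<open>x \<in> C\<close> assms(2) Mx(2,3) Mc(1,2) side_subset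
    by (intro card_near_perfect_matchings_eq[OF graph]) auto
  moreover have "card (Mx \<union> P) = card Mx + card P"
    using Mx(3) Pm(2) by (intro card_Un_matching[OF graph Mx(2) Pm(1)]) blast
  ultimately show ?thesis
    using card_matching_cv_Un(2)[OF assms(2,3) Mc_e Mc_e_sub N] by simp
qed

lemma near_factor_critical_side_singleton:
  assumes "edge_stable V E" "c \<in> C" "{c, v} \<in> E" "d \<in> V - {v} - C" "{d, v} \<in> E"
    and near_perfect: "\<And>x. x \<in> C \<Longrightarrow> \<exists>M. matching E M \<and> \<Union>M = C - {x}"
  shows "C = {c}"
proof (rule ccontr)
  assume "C \<noteq> {c}"
  obtain Mc where Mc: "matching E Mc" "\<Union>Mc = C - {c}"
    using near_perfect[OF assms(2)] by blast
  from \<open>C \<noteq> {c}\<close> assms(2) obtain x where "x \<in> C - {c}"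
    by blast
  with Mc(2) obtain e where e: "e \<in> Mc" "x \<in> e"
    by blast
  from \<open>x \<in> C - {c}\<close> have "x \<in> C"
    by blast
  then obtain Mx where Mx: "matching E Mx" "\<Union>Mx = C - {x}"
    using near_perfect by blast
  have fin: "finite (induced_edges E S)" for S
    using graph_finite_edges[OF graph] unfolding induced_edges_def by simp
  have "{v, d} \<subseteq> V"
    using graph_edge_vertices[OF graph assms(5)] by (simp add: insert_commute)
  with assms(4,5) side_subset have "{v, d} \<in> induced_edges E (V - C)"
    unfolding induced_edges_def by (auto simp: insert_commute)
  then have "matching (induced_edges E (V - C)) {{v, d}}"
    by (rule matching_singleton)
  then obtain P where P: "{{v, d}} \<subseteq> P" "maximal_matching (induced_edges E (V - C)) P"
    by (rule ex_maximal_matching_superset[OF fin])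
  then have "v \<in> \<Union>P"
    by blast
  have "matching (induced_edges E (V - C - {v})) {}"
    unfolding matching_def by simp
  then obtain N where "{} \<subseteq> N" and N: "maximal_matching (induced_edges E (V - C - {v})) N"
    by (rule ex_maximal_matching_superset[OF fin])
  have "equimatchable V E" "equimatchable V (E - {e})"
    using assms(1) e(1) Mc(1) unfolding edge_stable_def matching_def by blast+
  then have "card P = Suc (card N)" "card P = card N"
    using card_outside_matching_Suc[OF _ assms(2,3) Mc P(2) \<open>v \<in> \<Union>P\<close> N]
      card_outside_matching_eq[OF _ assms(2,3) Mc e Mx P(2) \<open>v \<in> \<Union>P\<close> N]
    by blast+
  then show False
    by simp
qed

end

lemma del_vertex_component_separation:
  assumes "graph V E" and C: "C \<in> components (del_vertex_V V v) (del_vertex_E E v)"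
  shows "vertex_separation V E v C"
proof (rule vertex_separation.intro)
  show "graph V E"
    by fact
  show "C \<subseteq> V - {v}"
    using component_subset[OF C] unfolding del_vertex_V_def .
  fix f assume "f \<in> E"
  with assms(1) obtain a b where ab: "a \<noteq> b" "f = {a, b}" "a \<in> V" "b \<in> V"
    by (rule graph_edgeE)
  show "v \<in> f \<or> f \<subseteq> C \<or> f \<subseteq> V - C - {v}"
  proof (cases "v \<in> f")
    case False
    with ab(2) have "a \<noteq> v" "b \<noteq> v"
      by auto
    moreover have "{a, b} \<in> E" "{b, a} \<in> E"
      using \<open>f \<in> E\<close> ab(2) by (simp_all add: insert_commute)
    ultimately have "a \<in> C \<longleftrightarrow> b \<in> C"
      using del_vertex_component_closed[OF C] ab(3,4) by blast
    with ab(2) \<open>a \<noteq> v\<close> \<open>b \<noteq> v\<close> ab(3,4) show ?thesis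
      by auto
  qed simp
qed

theorem lemma4p7:
  fixes V :: "'a set" and E :: "'a set set" and v :: 'a and C :: "'a set"
  assumes "graph V E"
    and "connected V E"
    and "edge_stable V E"
    and "cut_vertex V E v"
    and "C \<in> components (del_vertex_V V v) (del_vertex_E E v)"
    and "factor_critical C (induced_edges (del_vertex_E E v) C)"
  shows "card C = 1"
proof -
  interpret vertex_separation V E v C
    using assms(1,5) by (rule del_vertex_component_separation)
  have "v \<in> V"
    using assms(4) unfolding cut_vertex_def by blast
  obtain c where c: "c \<in> C" "{c, v} \<in> E"
    using del_vertex_component_neighbour[OF assms(2) \<open>v \<in> V\<close> assms(5)] by blast
  obtain d where d: "d \<in> V - {v} - C" "{d, v} \<in> E"
    using del_vertex_other_component_neighbour[OF assms(1,2,4,5)] by blast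
  have "del_vertex_E E v \<subseteq> E"
    unfolding del_vertex_E_def by blast
  note near_perfect = factor_critical_near_perfect_matching[OF assms(6) this]
  have "C = {c}"
    using assms(3) c d near_perfect by (rule near_factor_critical_side_singleton)
  then show ?thesis
    by simp
qed

end
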